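(* Let $n\ge2$ and let $T=P(x,u_0,u_1,u_2)$, with $P$ a real polynomial of total degree at least $2$ in $u_0,u_1,u_2$ (a genuinely non-linear operator of order at most two). If $T(\mathcal P_n)\subset\mathcal P_n$, then $n\le4$.
   Context: Operators are identified with polynomials $P(x,u_0,u_1,u_2)$ acting on smooth $f$ by $P[f](x)=P(x,f(x),f'(x),f''(x))$. $\mathcal P_s$ denotes the space of real polynomials in $x$ of degree at most $s$. *)

theory Defs
  imports "HOL-Computational_Algebra.Polynomial"
begin

text \<open>A real polynomial P(x,u0,u1,u2) in four variables is represented by its
  coefficient function: c (a,i,j,k) is the coefficient of x^a u0^i u1^j u2^k.
  It must have finite support.\<close>

type_synonym opoly = "nat \<times> nat \<times> nat \<times> nat \<Rightarrow> real"

definition opoly_finite :: "opoly \<Rightarrow> bool" where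
  "opoly_finite c \<longleftrightarrow> finite {m. c m \<noteq> 0}"

definition opoly_eval :: "opoly \<Rightarrow> real \<Rightarrow> real \<Rightarrow> real \<Rightarrow> real \<Rightarrow> real" where
  "opoly_eval c x u0 u1 u2 =
     (\<Sum>m\<in>{m. c m \<noteq> 0}. case m of (a,i,j,k) \<Rightarrow> c m * x^a * u0^i * u1^j * u2^k)"

definition opoly_udeg_ge2 :: "opoly \<Rightarrow> bool" where
  "opoly_udeg_ge2 c \<longleftrightarrow> (\<exists>a i j k. c (a,i,j,k) \<noteq> 0 \<and> i + j + k \<ge> 2)"

definition apply_op :: "opoly \<Rightarrow> real poly \<Rightarrow> real \<Rightarrow> real" where
  "apply_op c f x = opoly_eval c x (poly f x) (poly (pderiv f) x) (poly (pderiv (pderiv f)) x)"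

definition preserves_Pn :: "opoly \<Rightarrow> nat \<Rightarrow> bool" where
  "preserves_Pn c n \<longleftrightarrow>
     (\<forall>f::real poly. degree f \<le> n \<longrightarrow> (\<exists>g::real poly. degree g \<le> n \<and> (\<forall>x. apply_op c f x = poly g x)))"

end

theory Submission
  imports Defs
begin

text \<open>
  Group the monomials x^a u0^i u1^j u2^k of P by their degree d = i + j + k and their
  weight w = a - j - 2 k. Replacing f by s f and x by s x shows that each component
  T_(w,d) maps P_n into itself on its own, and T_(w,d)[f] = x^w G(f, x f', x^2 f'') for
  a form G of degree d. Let n \<ge> 5 and d \<ge> 2.

  If w + (n - 2) d > n, take f = x^(n-2) q with q quadratic: T_(w,d)[f] is divisible by
  x^(w + (n-2) d), hence zero, and its cofactor at x = 1 is G evaluated at an arbitrary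
  point of R^3. So G = 0.

  Otherwise w + n d \<le> 2 d + n. For f = (x - 1)^m a monomial with e = 2 i + j contributes
  (x - 1)^((m-2) d + e) times m^(j+k) (m - 1)^k. If the classes below e are empty, the
  class e would make T_(w,d)[f] divisible by a power of x - 1 exceeding n unless its
  coefficient sum vanishes; this happens for all m in an interval [n - L, n], and the sum
  is a polynomial of degree at most L in (m - 1) / m, so the class is empty as well.
\<close>

lemma sum_powi_class_eq_0:
  fixes b :: "'s \<Rightarrow> real" and E :: "'s \<Rightarrow> int"
  assumes "finite S" "\<And>x. x > 0 \<Longrightarrow> (\<Sum>s\<in>S. x powi E s * b s) = 0"
  shows "(\<Sum>s | s \<in> S \<and> E s = e. b s) = 0"
proof (cases "\<exists>s\<in>S. E s = e")
  case False
  then have "{s. s \<in> S \<and> E s = e} = {}" by auto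
  then show ?thesis by (simp only: sum.empty)
next
  case True
  define M where "M = (\<Sum>s\<in>S. nat (- E s))"
  have M: "0 \<le> E s + int M" if "s \<in> S" for s
  proof -
    have "nat (- E s) \<le> M"
      unfolding M_def using assms(1) that by (intro member_le_sum) auto
    then show ?thesis by linarith
  qed
  define P where "P = (\<Sum>s\<in>S. monom (b s) (nat (E s + int M)))"
  have "poly P x = 0" if "x > 0" for x
  proof -
    have "x ^ nat (E s + int M) = x ^ M * x powi E s" if "s \<in> S" for s
    proof -
      have "x ^ nat (E s + int M) = x powi (E s + int M)"
        using M [OF that] by (simp add: power_int_def)
      then show ?thesis
        using \<open>x > 0\<close> by (simp add: power_int_add)
    qed
    then have "poly P x = x ^ M * (\<Sum>s\<in>S. x powi E s * b s)"
      unfolding P_def poly_sum poly_monom sum_distrib_left by (intro sum.cong) auto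
    with assms(2) [OF that] show ?thesis by simp
  qed
  then have "{0<..} \<subseteq> {x. poly P x = 0}" by auto
  then have "P = 0"
    using poly_roots_finite infinite_Ioi finite_subset by blast
  then have "coeff P (nat (e + int M)) = 0" by simp
  moreover have "0 \<le> e + int M"
    using True M by blast
  then have "coeff P (nat (e + int M)) = (\<Sum>s\<in>S. if E s = e then b s else 0)"
    unfolding P_def coeff_sum coeff_monom using M by (intro sum.cong refl) (auto simp: nat_eq_iff2)
  ultimately show ?thesis
    using assms(1) by (simp add: sum.inter_filter)
qed

lemma coeff_sum_monom_inj:
  assumes "finite A" "inj_on p A" "x \<in> A"
  shows "coeff (\<Sum>t\<in>A. monom (h t) (p t)) (p x) = h x"
proof -
  have "coeff (\<Sum>t\<in>A. monom (h t) (p t)) (p x) = (\<Sum>t\<in>A. if t = x then h t else 0)"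
    unfolding coeff_sum coeff_monom using assms(2,3) by (intro sum.cong) (auto dest: inj_onD)
  then show ?thesis
    using assms(1,3) by simp
qed

fun umonomial :: "nat \<times> nat \<times> nat \<times> nat \<Rightarrow> 'a \<Rightarrow> 'a \<Rightarrow> 'a \<Rightarrow> 'a::comm_semiring_1" where
  "umonomial (a, i, j, k) u0 u1 u2 = u0 ^ i * u1 ^ j * u2 ^ k"

fun udeg :: "nat \<times> nat \<times> nat \<times> nat \<Rightarrow> nat" where
  "udeg (a, i, j, k) = i + j + k"

fun weight :: "nat \<times> nat \<times> nat \<times> nat \<Rightarrow> int" where
  "weight (a, i, j, k) = int a - int j - 2 * int k"

definition op_term :: "opoly \<Rightarrow> nat \<times> nat \<times> nat \<times> nat \<Rightarrow> real poly \<Rightarrow> real poly" where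
  "op_term c t f = smult (c t) (monom 1 (fst t) * umonomial t f (pderiv f) (pderiv (pderiv f)))"

definition op_poly :: "opoly \<Rightarrow> real poly \<Rightarrow> real poly" where
  "op_poly c f = (\<Sum>t | c t \<noteq> 0. op_term c t f)"

lemma poly_umonomial:
  "poly (umonomial t p0 p1 p2) x = umonomial t (poly p0 x) (poly p1 x) (poly p2 x)"
  by (cases t) simp

lemma poly_op_poly: "poly (op_poly c f) x = apply_op c f x"
  unfolding op_poly_def apply_op_def opoly_eval_def poly_sum
  by (intro sum.cong refl) (auto simp: op_term_def poly_monom)

lemma degree_op_poly_le:
  assumes "preserves_Pn c n" "degree f \<le> n"
  shows "degree (op_poly c f) \<le> n"
proof -
  obtain g where g: "degree g \<le> n" "\<And>x. apply_op c f x = poly g x"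
    using assms unfolding preserves_Pn_def by blast
  then have "op_poly c f = g"
    by (simp add: poly_eq_poly_eq_iff [symmetric] fun_eq_iff poly_op_poly)
  with g show ?thesis by simp
qed

section \<open>Isobaric components\<close>

definition component :: "opoly \<Rightarrow> int \<Rightarrow> nat \<Rightarrow> (nat \<times> nat \<times> nat \<times> nat) set" where
  "component c w d = {t. c t \<noteq> 0 \<and> weight t = w \<and> udeg t = d}"

definition op_component :: "opoly \<Rightarrow> int \<Rightarrow> nat \<Rightarrow> real poly \<Rightarrow> real poly" where
  "op_component c w d f = (\<Sum>t\<in>component c w d. op_term c t f)"

lemma finite_component: "opoly_finite c \<Longrightarrow> finite (component c w d)"
  unfolding opoly_finite_def component_def by (rule finite_subset [rotated]) auto

lemma op_term_smult: "op_term c t (smult s f) = smult (s ^ udeg t) (op_term c t f)"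
  by (cases t) (simp add: op_term_def pderiv_smult smult_power power_add mult_ac)

lemma coeff_op_term_pcompose:
  assumes "s \<noteq> 0"
  shows "coeff (op_term c t (f \<circ>\<^sub>p [:0, s:])) N = s powi (int N - weight t) * coeff (op_term c t f) N"
proof -
  obtain a i j k where t: "t = (a, i, j, k)" by (cases t)
  have d1: "pderiv (f \<circ>\<^sub>p [:0, s:]) = smult s (pderiv f \<circ>\<^sub>p [:0, s:])"
    by (simp add: pderiv_pcompose pderiv_pCons)
  have d2: "pderiv (pderiv (f \<circ>\<^sub>p [:0, s:])) = smult (s * s) (pderiv (pderiv f) \<circ>\<^sub>p [:0, s:])"
    by (simp add: d1 pderiv_smult pderiv_pcompose pderiv_pCons)
  have "poly (smult (s ^ a) (op_term c t (f \<circ>\<^sub>p [:0, s:]))) x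
      = poly (smult (s ^ (j + 2 * k)) (op_term c t f \<circ>\<^sub>p [:0, s:])) x" for x
    unfolding t op_term_def umonomial.simps fst_conv
    by (subst d2, subst d1)
      (simp add: poly_pcompose poly_monom power_mult_distrib power_add mult_2 mult_2_right mult_ac)
  then have "smult (s ^ a) (op_term c t (f \<circ>\<^sub>p [:0, s:]))
      = smult (s ^ (j + 2 * k)) (op_term c t f \<circ>\<^sub>p [:0, s:])"
    by (simp add: poly_eq_poly_eq_iff [symmetric] fun_eq_iff del: poly_smult)
  then have "coeff (smult (s ^ a) (op_term c t (f \<circ>\<^sub>p [:0, s:]))) N
      = coeff (smult (s ^ (j + 2 * k)) (op_term c t f \<circ>\<^sub>p [:0, s:])) N"
    by (rule arg_cong)
  then have scaled: "s ^ a * coeff (op_term c t (f \<circ>\<^sub>p [:0, s:])) N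
      = s ^ (j + 2 * k + N) * coeff (op_term c t f) N"
    by (simp add: coeff_pcompose_linear power_add mult.assoc)
  have "s powi (int N - weight t) = s ^ (j + 2 * k + N) / s ^ a"
  proof -
    have "int N - weight t = int (j + 2 * k + N) - int a"
      by (simp add: t)
    then show ?thesis
      by (simp only: power_int_diff [OF disjI1 [OF assms]] power_int_of_nat)
  qed
  then have "s powi (int N - weight t) * coeff (op_term c t f) N
      = s ^ a * coeff (op_term c t (f \<circ>\<^sub>p [:0, s:])) N / s ^ a"
    by (simp add: scaled)
  then show ?thesis
    using assms by simp
qed

lemma coeff_homogeneous_part_eq_0:
  assumes "opoly_finite c" "preserves_Pn c n" "degree f \<le> n" "n < N"
  shows "(\<Sum>t | c t \<noteq> 0 \<and> udeg t = d. coeff (op_term c t f) N) = 0"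
proof -
  have "(\<Sum>t | c t \<noteq> 0. s powi int (udeg t) * coeff (op_term c t f) N) = 0" for s
  proof -
    have "degree (smult s f) \<le> n"
      using assms(3) degree_smult_le order_trans by blast
    then have "coeff (op_poly c (smult s f)) N = 0"
      using assms(2,4) degree_op_poly_le coeff_eq_0 by (metis le_less_trans)
    then show ?thesis by (simp add: op_poly_def coeff_sum op_term_smult)
  qed
  then show ?thesis
    using sum_powi_class_eq_0 [of "{t. c t \<noteq> 0}" "\<lambda>t. int (udeg t)" _ "int d"] assms(1)
    by (simp add: opoly_finite_def)
qed

lemma degree_op_component_le:
  assumes "opoly_finite c" "preserves_Pn c n" "degree f \<le> n"
  shows "degree (op_component c w d f) \<le> n"
proof (rule degree_le, intro allI impI)
  fix N assume "n < N"
  let ?S = "{t. c t \<noteq> 0 \<and> udeg t = d}"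
  have "finite ?S"
    using assms(1) unfolding opoly_finite_def by (rule finite_subset [rotated]) auto
  moreover have "(\<Sum>t\<in>?S. s powi (int N - weight t) * coeff (op_term c t f) N) = 0" if "s > 0" for s
    using coeff_homogeneous_part_eq_0 [OF assms(1,2) _ \<open>n < N\<close>, of "f \<circ>\<^sub>p [:0, s:]" d] assms(3) that
    by (simp add: degree_pcompose coeff_op_term_pcompose)
  ultimately have "(\<Sum>t | t \<in> ?S \<and> int N - weight t = int N - w. coeff (op_term c t f) N) = 0"
    by (rule sum_powi_class_eq_0)
  moreover have "{t. t \<in> ?S \<and> int N - weight t = int N - w} = component c w d"
    by (auto simp: component_def)
  ultimately show "coeff (op_component c w d f) N = 0"
    by (simp add: op_component_def coeff_sum)
qed

section \<open>Components of high weight\<close>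

definition euler_shift :: "nat \<Rightarrow> real poly \<Rightarrow> real poly" where
  "euler_shift l q = smult (real l) q + [:0, 1:] * pderiv q"

lemma pderiv_monom_mult:
  assumes "1 \<le> l"
  shows "pderiv (monom 1 l * q) = monom 1 (l - 1) * euler_shift l q"
proof -
  have "[:0, 1:] = monom (1::real) 1"
    by (simp add: monom_altdef)
  then have x_l: "monom (1::real) l = monom 1 (l - 1) * [:0, 1:]"
    using assms by (simp add: mult_monom)
  have "pderiv (monom 1 l * q) = monom (real l) (l - 1) * q + monom 1 l * pderiv q"
    by (simp add: pderiv_mult pderiv_monom)
  also have "\<dots> = monom 1 (l - 1) * euler_shift l q"
    unfolding x_l euler_shift_def smult_monom [of "real l" 1, simplified, symmetric]
    by (simp add: algebra_simps)
  finally show ?thesis .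
qed

lemma op_term_monom_mult:
  assumes "2 \<le> l" "t = (a, i, j, k)"
  shows "op_term c t (monom 1 l * q) =
    monom 1 (a + l * i + (l - 1) * j + (l - 2) * k) *
    smult (c t) (umonomial t q (euler_shift l q) (euler_shift (l - 1) (euler_shift l q)))"
proof -
  have d1: "pderiv (monom 1 l * q) = monom 1 (l - 1) * euler_shift l q"
    using assms(1) by (simp add: pderiv_monom_mult)
  have d2: "pderiv (pderiv (monom 1 l * q)) = monom 1 (l - 2) * euler_shift (l - 1) (euler_shift l q)"
    using assms(1) pderiv_monom_mult [of "l - 1" "euler_shift l q"]
    unfolding d1 by (simp add: numeral_2_eq_2)
  let ?E1 = "euler_shift l q" and ?E2 = "euler_shift (l - 1) (euler_shift l q)"
  have "monom 1 a * (monom 1 l * q) ^ i * (monom 1 (l - 1) * ?E1) ^ j * (monom 1 (l - 2) * ?E2) ^ k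
      = (monom 1 a * monom 1 (l * i) * monom 1 ((l - 1) * j) * monom 1 ((l - 2) * k))
        * (q ^ i * ?E1 ^ j * ?E2 ^ k)"
    by (simp only: power_mult_distrib monom_power power_one mult_ac)
  also have "monom 1 a * monom 1 (l * i) * monom 1 ((l - 1) * j) * monom 1 ((l - 2) * k)
      = (monom 1 (a + l * i + (l - 1) * j + (l - 2) * k) :: real poly)"
    by (simp add: mult_monom)
  finally show ?thesis
    unfolding op_term_def assms(2) umonomial.simps fst_conv
    by (subst d2, subst d1) (simp add: mult_ac)
qed

lemma op_component_monom_mult:
  assumes "2 \<le> l"
  shows "op_component c w d (monom 1 l * q) =
    monom 1 (nat (w + int (l * d))) *
    (\<Sum>t\<in>component c w d. smult (c t)
      (umonomial t q (euler_shift l q) (euler_shift (l - 1) (euler_shift l q))))"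
proof -
  have "op_term c t (monom 1 l * q) = monom 1 (nat (w + int (l * d))) *
      smult (c t) (umonomial t q (euler_shift l q) (euler_shift (l - 1) (euler_shift l q)))"
    if "t \<in> component c w d" for t
  proof -
    obtain a i j k where t: "t = (a, i, j, k)" by (cases t)
    obtain l' where l: "l = l' + 2" using assms by (metis le_add_diff_inverse2)
    have "int a = w + int j + 2 * int k" "d = i + j + k"
      using that by (simp_all add: component_def t)
    then have "int (a + l * i + (l - 1) * j + (l - 2) * k) = w + int (l * d)"
      by (simp add: l algebra_simps)
    then have "a + l * i + (l - 1) * j + (l - 2) * k = nat (w + int (l * d))"
      by (metis nat_int)
    then show ?thesis
      using op_term_monom_mult [OF assms t] by simp
  qed
  then show ?thesis
    by (simp add: op_component_def sum_distrib_left)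
qed

lemma poly_euler_shift_1:
  "poly (euler_shift l q) 1 = real l * poly q 1 + poly (pderiv q) 1"
  by (simp add: euler_shift_def)

lemma poly_euler_shift2_1:
  assumes "1 \<le> l"
  shows "poly (euler_shift (l - 1) (euler_shift l q)) 1 =
    real l * (real l - 1) * poly q 1 + 2 * real l * poly (pderiv q) 1 + poly (pderiv (pderiv q)) 1"
proof -
  have "pderiv (euler_shift l q) = smult (real l + 1) (pderiv q) + [:0, 1:] * pderiv (pderiv q)"
    by (simp add: euler_shift_def pderiv_add pderiv_smult pderiv_mult pderiv_pCons smult_add_left)
  then show ?thesis
    using assms by (simp add: poly_euler_shift_1 of_nat_diff algebra_simps)
qed

lemma euler_values_surj:
  assumes "1 \<le> l"
  shows "\<exists>q. degree q \<le> 2 \<and> poly q 1 = u0 \<and> poly (euler_shift l q) 1 = u1 \<and>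
    poly (euler_shift (l - 1) (euler_shift l q)) 1 = u2"
proof -
  define p1 where "p1 = u1 - real l * u0"
  define p2 where "p2 = u2 - real l * (real l - 1) * u0 - 2 * real l * p1"
  define q where "q = [:u0 - p1 + p2 / 2, p1 - p2, p2 / 2:]"
  have "degree q \<le> 2"
    by (simp add: q_def degree_pCons_le)
  moreover have "poly q 1 = u0" "poly (pderiv q) 1 = p1" "poly (pderiv (pderiv q)) 1 = p2"
    by (simp_all add: q_def pderiv_pCons)
  moreover have "poly (euler_shift l q) 1 = u1"
    using calculation by (simp add: poly_euler_shift_1 p1_def)
  moreover have "poly (euler_shift (l - 1) (euler_shift l q)) 1 = u2"
    using calculation by (simp only: poly_euler_shift2_1 [OF assms]) (simp add: p1_def p2_def)
  ultimately show ?thesis by blast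
qed

lemma component_form_eq_0_if_high_weight:
  assumes "opoly_finite c" "preserves_Pn c n" "2 \<le> l" "l + 2 \<le> n" "int n < w + int (l * d)"
  shows "(\<Sum>t\<in>component c w d. c t * umonomial t u0 u1 u2) = 0"
proof -
  obtain q where q: "degree q \<le> 2" "poly q 1 = u0" "poly (euler_shift l q) 1 = u1"
    "poly (euler_shift (l - 1) (euler_shift l q)) 1 = u2"
    using euler_values_surj [of l u0 u1 u2] assms(3) by (auto simp del: One_nat_def)
  define H where "H = (\<Sum>t\<in>component c w d. smult (c t)
    (umonomial t q (euler_shift l q) (euler_shift (l - 1) (euler_shift l q))))"
  have "degree (monom 1 l * q) \<le> n"
    using degree_mult_le [of "monom 1 l" q] degree_monom_le [of "1::real" l] q(1) assms(4) by linarith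
  moreover have "op_component c w d (monom 1 l * q) = monom 1 (nat (w + int (l * d))) * H"
    unfolding H_def by (rule op_component_monom_mult [OF assms(3)])
  ultimately have "degree (monom 1 (nat (w + int (l * d))) * H) \<le> n"
    using degree_op_component_le [OF assms(1,2)] by metis
  then have "H = 0"
    using assms(5) by (cases "H = 0") (auto simp: degree_mult_eq degree_monom_eq)
  then have "poly H 1 = 0" by simp
  then show ?thesis
    unfolding H_def poly_sum poly_umonomial poly_smult q .
qed

text \<open>Kronecker substitution u1 = u, u2 = u ^ (d + 1) separates the monomials of degree d.\<close>
lemma component_eq_empty_if_form_eq_0:
  assumes "opoly_finite c" "\<And>u. (\<Sum>t\<in>component c w d. c t * umonomial t 1 u (u ^ Suc d)) = 0"
  shows "component c w d = {}"
proof (rule ccontr)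
  assume "component c w d \<noteq> {}"
  then obtain t0 where t0: "t0 \<in> component c w d" by blast
  define kr where "kr t = (case t of (a, i, j, k) \<Rightarrow> j + Suc d * k)"
    for t :: "nat \<times> nat \<times> nat \<times> nat"
  have inj: "inj_on kr (component c w d)"
  proof (rule inj_onI)
    fix t t' assume tt': "t \<in> component c w d" "t' \<in> component c w d" "kr t = kr t'"
    obtain a i j k where t: "t = (a, i, j, k)" by (cases t)
    obtain a' i' j' k' where t': "t' = (a', i', j', k')" by (cases t')
    have jk: "j < Suc d" "j' < Suc d" "j + Suc d * k = j' + Suc d * k'"
      using tt' by (auto simp: component_def kr_def t t')
    have "j = (j + Suc d * k) mod Suc d" "k = (j + Suc d * k) div Suc d"
      "j' = (j' + Suc d * k') mod Suc d" "k' = (j' + Suc d * k') div Suc d"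
      using jk(1,2) by (simp_all del: mult_Suc)
    then have "j = j'" "k = k'"
      using jk(3) by metis+
    with tt' show "t = t'"
      by (auto simp: component_def t t')
  qed
  define P where "P = (\<Sum>t\<in>component c w d. monom (c t) (kr t))"
  have "poly P u = 0" for u
  proof -
    have "umonomial t 1 u (u ^ Suc d) = u ^ kr t" for t
      by (cases t) (simp add: kr_def power_add power_mult power_mult_distrib)
    then show ?thesis
      using assms(2) [of u] by (simp add: P_def poly_sum poly_monom)
  qed
  then have "P = 0"
    using poly_all_0_iff_0 by blast
  then have "c t0 = 0"
    using coeff_sum_monom_inj [OF finite_component [OF assms(1)] inj t0, of c] by (simp add: P_def)
  with t0 show False
    by (simp add: component_def)
qed

lemma component_eq_empty_if_high_weight:
  assumes "opoly_finite c" "preserves_Pn c n" "2 \<le> l" "l + 2 \<le> n" "int n < w + int (l * d)"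
  shows "component c w d = {}"
  using component_form_eq_0_if_high_weight [OF assms]
  by (intro component_eq_empty_if_form_eq_0 [OF assms(1)])

section \<open>Components of low weight\<close>

fun excess :: "nat \<times> nat \<times> nat \<times> nat \<Rightarrow> nat" where
  "excess (a, i, j, k) = 2 * i + j"

definition excess_class :: "opoly \<Rightarrow> int \<Rightarrow> nat \<Rightarrow> nat \<Rightarrow> (nat \<times> nat \<times> nat \<times> nat) set" where
  "excess_class c w d e = {t \<in> component c w d. excess t = e}"

lemma excess_classE:
  assumes "t \<in> excess_class c w d e"
  obtains a i j k where "t = (a, i, j, k)" "i + j + k = d" "2 * i + j = e"
    "int a = w + int j + 2 * int k" "c t \<noteq> 0"
  using assms by (cases t) (auto simp: excess_class_def component_def)

lemma inj_on_excess_class: "inj_on (\<lambda>t. snd (snd (snd t))) (excess_class c w d e)"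
proof (rule inj_onI)
  fix t t' assume t: "t \<in> excess_class c w d e" and t': "t' \<in> excess_class c w d e"
    and eq: "snd (snd (snd t)) = snd (snd (snd t'))"
  obtain a i j k where t: "t = (a, i, j, k)" "i + j + k = d" "2 * i + j = e"
    "int a = w + int j + 2 * int k"
    using t by (rule excess_classE)
  obtain a' i' j' k' where t': "t' = (a', i', j', k')" "i' + j' + k' = d" "2 * i' + j' = e"
    "int a' = w + int j' + 2 * int k'"
    using t' by (rule excess_classE)
  have "k = k'"
    using eq by (simp add: t(1) t'(1))
  then have "i = i'" "j = j'"
    using t(2,3) t'(2,3) by linarith+
  moreover have "a = a'"
    using t(4) t'(4) \<open>k = k'\<close> calculation(2) by linarith
  ultimately show "t = t'"
    by (simp add: t(1) t'(1) \<open>k = k'\<close>)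
qed

lemma umonomial_root_lead:
  fixes x :: real
  assumes "x \<noteq> 0"
  shows "umonomial (a, i, j, k) 1 x (x * (x - 1)) = x ^ (j + 2 * k) * ((x - 1) / x) ^ k"
proof -
  have "x * (x - 1) = x ^ 2 * ((x - 1) / x)"
    using assms by (simp add: power2_eq_square)
  then show ?thesis
    by (simp only: umonomial.simps power_one mult_1 power_mult_distrib power_mult [symmetric]
        power_add mult.assoc)
qed

lemma op_term_shifted_power:
  assumes "2 \<le> m"
  shows "op_term c t ([:-1, 1:] ^ m) =
    smult (c t * umonomial t 1 (real m) (real m * (real m - 1)))
      (monom 1 (fst t) * [:-1, 1:] ^ ((m - 2) * udeg t + excess t))"
proof -
  obtain a i j k where t: "t = (a, i, j, k)" by (cases t)
  let ?X = "[:-1, 1:] :: real poly"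
  have d1: "pderiv (?X ^ m) = smult (real m) (?X ^ (m - 1))"
    by (simp add: pderiv_power pderiv_pCons)
  have d2: "pderiv (pderiv (?X ^ m)) = smult (real m * (real m - 1)) (?X ^ (m - 2))"
    using assms by (simp add: d1 pderiv_smult pderiv_power pderiv_pCons of_nat_diff numeral_2_eq_2)
  have "(?X ^ m) ^ i * (?X ^ (m - 1)) ^ j * (?X ^ (m - 2)) ^ k = ?X ^ ((m - 2) * (i + j + k) + (2 * i + j))"
  proof -
    obtain m' where "m = m' + 2" using assms by (metis le_add_diff_inverse2)
    then have "m * i + (m - 1) * j + (m - 2) * k = (m - 2) * (i + j + k) + (2 * i + j)"
      by (simp add: algebra_simps)
    then show ?thesis
      by (simp flip: power_mult power_add)
  qed
  then show ?thesis
    unfolding op_term_def t umonomial.simps fst_conv udeg.simps excess.simps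
    by (subst d2, subst d1) (simp add: smult_power power_mult_distrib mult_ac)
qed

text \<open>If all excess classes below e are empty, T[(x - 1) ^ m] is divisible by
  (x - 1) ^ ((m - 2) * d + e), and the cofactor at 1 is the sum below.\<close>
lemma lowest_excess_sum_eq_0:
  assumes "finite (component c w d)"
    and deg: "degree (op_component c w d ([:-1, 1:] ^ m)) \<le> n"
    and "2 \<le> m" "n < (m - 2) * d + e" "\<forall>t\<in>component c w d. e \<le> excess t"
  shows "(\<Sum>t\<in>excess_class c w d e. c t * umonomial t 1 (real m) (real m * (real m - 1))) = 0"
proof -
  let ?X = "[:-1, 1:] :: real poly"
  let ?b = "\<lambda>t. c t * umonomial t 1 (real m) (real m * (real m - 1))"
  define B where "B = (\<Sum>t\<in>component c w d. smult (?b t) (monom 1 (fst t) * ?X ^ (excess t - e)))"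
  have factor: "op_component c w d (?X ^ m) = ?X ^ ((m - 2) * d + e) * B"
  proof -
    have "op_term c t (?X ^ m) = ?X ^ ((m - 2) * d + e) * smult (?b t) (monom 1 (fst t) * ?X ^ (excess t - e))"
      if "t \<in> component c w d" for t
    proof -
      have "udeg t = d" "e \<le> excess t"
        using that assms(5) unfolding component_def by blast+
      then have "(m - 2) * udeg t + excess t = ((m - 2) * d + e) + (excess t - e)"
        by simp
      then have "?X ^ ((m - 2) * udeg t + excess t) = ?X ^ ((m - 2) * d + e) * ?X ^ (excess t - e)"
        by (simp only: power_add)
      then show ?thesis
        unfolding op_term_shifted_power [OF assms(3)] by (simp add: mult_ac)
    qed
    then show ?thesis
      by (simp add: op_component_def B_def sum_distrib_left)
  qed
  moreover have "op_component c w d (?X ^ m) = 0"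
  proof (rule ccontr)
    assume "op_component c w d (?X ^ m) \<noteq> 0"
    moreover have "?X ^ ((m - 2) * d + e) dvd op_component c w d (?X ^ m)"
      unfolding factor by simp
    ultimately have "(m - 2) * d + e \<le> degree (op_component c w d (?X ^ m))"
      using dvd_imp_degree_le degree_linear_power by metis
    with deg assms(4) show False by linarith
  qed
  ultimately have "B = 0" by simp
  then have "poly B 1 = 0" by simp
  moreover have "poly B 1 = (\<Sum>t\<in>component c w d. if excess t = e then ?b t else 0)"
    unfolding B_def poly_sum using assms(5) by (intro sum.cong) (auto simp: poly_monom)
  ultimately show ?thesis
    using assms(1) by (simp add: excess_class_def sum.inter_filter)
qed

text \<open>The exponents are shifted by d - e (truncated subtraction), the least k occurring in
  the class; this keeps the degree below the number of available m.\<close>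
definition excess_class_poly :: "opoly \<Rightarrow> int \<Rightarrow> nat \<Rightarrow> nat \<Rightarrow> real poly" where
  "excess_class_poly c w d e =
    (\<Sum>t\<in>excess_class c w d e. monom (c t) (snd (snd (snd t)) - (d - e)))"

lemma degree_excess_class_poly:
  assumes "finite (component c w d)"
  shows "degree (excess_class_poly c w d e) \<le> (2 * d - e) div 2 - (d - e)"
  unfolding excess_class_poly_def
proof (rule degree_sum_le)
  show "finite (excess_class c w d e)"
    using assms by (simp add: excess_class_def)
  fix t assume "t \<in> excess_class c w d e"
  then have "snd (snd (snd t)) - (d - e) \<le> (2 * d - e) div 2 - (d - e)"
    by (elim excess_classE) simp
  then show "degree (monom (c t) (snd (snd (snd t)) - (d - e))) \<le> (2 * d - e) div 2 - (d - e)"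
    using degree_monom_le order_trans by blast
qed

lemma excess_class_sum_eq_poly:
  assumes "m \<noteq> 0"
  shows "(\<Sum>t\<in>excess_class c w d e. c t * umonomial t 1 (real m) (real m * (real m - 1)))
    = real m ^ (2 * d - e) * ((real m - 1) / real m) ^ (d - e)
      * poly (excess_class_poly c w d e) ((real m - 1) / real m)"
proof -
  let ?z = "(real m - 1) / real m"
  have "umonomial t 1 (real m) (real m * (real m - 1))
      = real m ^ (2 * d - e) * ?z ^ (d - e) * ?z ^ (snd (snd (snd t)) - (d - e))"
    if "t \<in> excess_class c w d e" for t
    using that
  proof (rule excess_classE)
    fix a i j k assume t: "t = (a, i, j, k)" "i + j + k = d" "2 * i + j = e"
    have m0: "real m \<noteq> 0"
      using assms by simp
    have e1: "j + 2 * k = 2 * d - e" and e2: "?z ^ k = ?z ^ (d - e) * ?z ^ (k - (d - e))"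
      using t by (auto simp flip: power_add)
    show ?thesis
      by (simp only: t(1) snd_conv umonomial_root_lead [OF m0] e1 e2 mult.assoc)
  qed
  then show ?thesis
    unfolding excess_class_poly_def poly_sum poly_monom sum_distrib_left
    by (intro sum.cong refl) (simp add: mult_ac)
qed

lemma coeff_excess_class_poly:
  assumes "finite (component c w d)" "t \<in> excess_class c w d e"
  shows "coeff (excess_class_poly c w d e) (snd (snd (snd t)) - (d - e)) = c t"
proof -
  have inj: "inj_on (\<lambda>t. snd (snd (snd t)) - (d - e)) (excess_class c w d e)"
  proof (rule inj_onI)
    fix t t' assume t: "t \<in> excess_class c w d e" and t': "t' \<in> excess_class c w d e"
      and "snd (snd (snd t)) - (d - e) = snd (snd (snd t')) - (d - e)"
    moreover have "d - e \<le> snd (snd (snd t))" "d - e \<le> snd (snd (snd t'))"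
      using t t' by (auto elim!: excess_classE)
    ultimately have "snd (snd (snd t)) = snd (snd (snd t'))"
      by simp
    then show "t = t'"
      using inj_onD [OF inj_on_excess_class _ t t'] by blast
  qed
  have "finite (excess_class c w d e)"
    using assms(1) by (simp add: excess_class_def)
  from coeff_sum_monom_inj [OF this inj assms(2)] show ?thesis
    unfolding excess_class_poly_def .
qed

lemma inj_on_pred_ratio: "inj_on (\<lambda>m::nat. (real m - 1) / real m) {0<..}"
proof (rule inj_onI)
  fix x y :: nat assume "x \<in> {0<..}" "y \<in> {0<..}" "(real x - 1) / real x = (real y - 1) / real y"
  then have "(real x - 1) * real y = (real y - 1) * real x"
    by (simp add: frac_eq_eq)
  then show "x = y" by (simp add: algebra_simps)
qed

lemma excess_class_eq_empty:
  assumes fin: "finite (component c w d)"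
    and M: "finite M" "\<forall>m\<in>M. 2 \<le> m" "(2 * d - e) div 2 - (d - e) < card M"
    and vanish: "\<And>m. m \<in> M \<Longrightarrow>
      (\<Sum>t\<in>excess_class c w d e. c t * umonomial t 1 (real m) (real m * (real m - 1))) = 0"
  shows "excess_class c w d e = {}"
proof -
  let ?z = "\<lambda>m. (real m - 1) / real m"
  have "poly (excess_class_poly c w d e) (?z m) = 0" if "m \<in> M" for m
  proof -
    have "real m \<noteq> 0" "?z m \<noteq> 0"
      using M(2) that by auto
    then show ?thesis
      using vanish [OF that] excess_class_sum_eq_poly [of m c w d e] by simp
  qed
  moreover have "card (?z ` M) = card M"
    using M(2) by (intro card_image inj_on_subset [OF inj_on_pred_ratio]) auto
  ultimately have "excess_class_poly c w d e = 0"
    using degree_excess_class_poly [OF fin, of e] M(3)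
    by (intro poly_eqI_degree [of "?z ` M"]) auto
  then have "c t = 0" if "t \<in> excess_class c w d e" for t
    using coeff_excess_class_poly [OF fin that] by simp
  moreover have "c t \<noteq> 0" if "t \<in> excess_class c w d e" for t
    using that by (simp add: excess_class_def component_def)
  ultimately show ?thesis
    by blast
qed

lemma low_weight_root_order_gt:
  fixes n d e :: nat and w :: int
  assumes "5 \<le> n" "2 \<le> d" "int e \<le> w + 2 * int d" "w + int (n * d) \<le> int (2 * d + n)"
  defines "L \<equiv> (2 * d - e) div 2 - (d - e)"
  shows "2 \<le> n - L" "n < (n - L - 2) * d + e"
proof -
  have "2 * ((2 * d - e) div 2) \<le> 2 * d - e" by simp
  then have L_le: "2 * L \<le> e"
    unfolding L_def by arith
  have e_le: "int e + int n * int d \<le> 4 * int d + int n"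
    using assms(3,4) by simp
  have "5 * int d \<le> int n * int d"
    using assms(1) by (intro mult_right_mono) auto
  with e_le assms(2) L_le show L2: "2 \<le> n - L"
    by linarith
  have h1: "2 * int L * int d \<le> int e * int d"
    using L_le by (intro mult_right_mono) auto
  have h2: "int e * (int d - 2) \<le> (4 * int d + int n - int n * int d) * (int d - 2)"
    using e_le assms(2) by (intro mult_right_mono) auto
  have h3: "0 < int d * (int n - 4) * (int d - 1)"
    using assms(1,2) by simp
  have "int n < (int n - int L - 2) * int d + int e"
    using h1 h2 h3 by (simp add: algebra_simps)
  moreover have "int ((n - L - 2) * d + e) = (int n - int L - 2) * int d + int e"
    using L2 by (simp add: of_nat_diff)
  ultimately show "n < (n - L - 2) * d + e"
    by linarith
qed

lemma component_eq_empty_if_low_weight: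
  assumes fin: "opoly_finite c" and pres: "preserves_Pn c n"
    and "5 \<le> n" "2 \<le> d" "w + int (n * d) \<le> int (2 * d + n)"
  shows "component c w d = {}"
proof -
  have "excess_class c w d e = {}" for e
  proof (induction e rule: less_induct)
    case (less e)
    then have lower: "\<forall>t\<in>component c w d. e \<le> excess t"
      unfolding excess_class_def using not_le by blast
    show ?case
    proof (rule ccontr)
      assume "excess_class c w d e \<noteq> {}"
      then have e_le: "int e \<le> w + 2 * int d"
        by (auto elim!: excess_classE)
      define L where "L = (2 * d - e) div 2 - (d - e)"
      note count = low_weight_root_order_gt [OF assms(3,4) e_le assms(5), folded L_def]
      have "excess_class c w d e = {}"
      proof (rule excess_class_eq_empty [OF finite_component [OF fin], of "{n - L..n}"])
        show "\<forall>m\<in>{n - L..n}. 2 \<le> m"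
          using count(1) by auto
        have "card {n - L..n} = Suc L"
          using count(1) by simp
        then show "(2 * d - e) div 2 - (d - e) < card {n - L..n}"
          by (simp flip: L_def)
      next
        fix m assume m: "m \<in> {n - L..n}"
        have "degree (op_component c w d ([:-1, 1:] ^ m)) \<le> n"
          using m by (intro degree_op_component_le [OF fin pres]) (simp add: degree_linear_power)
        moreover have "n < (m - 2) * d + e"
          using m count(2) by (meson atLeastAtMost_iff diff_le_mono le_trans mult_le_mono1 add_le_mono1 not_le)
        ultimately show "(\<Sum>t\<in>excess_class c w d e.
            c t * umonomial t 1 (real m) (real m * (real m - 1))) = 0"
          using m count(1) lower
          by (intro lowest_excess_sum_eq_0 [OF finite_component [OF fin]]) auto
      qed simp
      with \<open>excess_class c w d e \<noteq> {}\<close> show False by simp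
    qed
  qed
  then show ?thesis
    unfolding excess_class_def by blast
qed

theorem mainTheorem5:
  fixes c :: opoly and n :: nat
  assumes "n \<ge> 2"
    and "opoly_finite c"
    and "opoly_udeg_ge2 c"
    and "preserves_Pn c n"
  shows "n \<le> 4"
proof (rule ccontr)
  assume "\<not> n \<le> 4"
  then have "5 \<le> n" by simp
  obtain t where t: "c t \<noteq> 0" "2 \<le> udeg t"
    using assms(3) unfolding opoly_udeg_ge2_def by force
  let ?w = "weight t" and ?d = "udeg t"
  have "t \<in> component c ?w ?d"
    using t(1) by (simp add: component_def)
  moreover have "component c ?w ?d = {}"
  proof (cases "int n < ?w + int ((n - 2) * ?d)")
    case True
    with \<open>5 \<le> n\<close> show ?thesis
      by (intro component_eq_empty_if_high_weight [OF assms(2,4), of "n - 2"]) auto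
  next
    case False
    with \<open>5 \<le> n\<close> have "?w + int (n * ?d) \<le> int (2 * ?d + n)"
      by (simp add: of_nat_diff algebra_simps)
    with \<open>5 \<le> n\<close> t(2) show ?thesis
      by (intro component_eq_empty_if_low_weight [OF assms(2,4)])
  qed
  ultimately show False by simp
qed

end
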